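(* Let $S$ be a relation algebra and $\# : S\to\mathbb{N}\cup\{\infty\}$ a function. Consider the properties (C1a) $\#\bot=0$; (C1b) $\forall x:\ \#x=0\iff x=\bot$; (C4a) $\forall x,y:\ \#x+\#y=\#(x\sqcup y)+\#(x\sqcap y)$; (C4b) $\forall x,y:\ x\sqsubseteq y\implies\#x\le\#y$; (C7a) $\forall x:\ \#x=\#\top\iff x=\top$; (C9) $\#\top\neq\infty$. Then: 1. (C1a) and (C4a) together imply (C4b). 2. (C1b), (C4a) and (C9) together imply (C7a).
   Context: A Stone relation algebra is a structure $(S,\sqcup,\sqcap,\cdot,\overline{\,\cdot\,},{}^{\smile},\bot,\top,1)$ (write $xy$ for $x\cdot y$, $\overline{x}$ for the pseudocomplement, $x^{\smile}$ for the converse) such that: $(S,\sqcup,\sqcap,\bot,\top)$ is a bounded distributive lattice with order $x\sqsubseteq y\iff x\sqcup y=y$; $x\sqcap y=\bot\iff x\sqsubseteq\overline{y}$; $\overline{x}\sqcup\overline{\overline{x}}=\top$; $\cdot$ is associative with two-sided unit $1$, distributes over $\sqcup$ on both sides, and $\bot$ is a zero of $\cdot$; $x^{\smile\smile}=x$, $(xy)^{\smile}=y^{\smile}x^{\smile}$, $(x\sqcup y)^{\smile}=x^{\smile}\sqcup y^{\smile}$; $\overline{\overline{1}}=1$; $\overline{\overline{xy}}=\overline{\overline{x}}\,\overline{\overline{y}}$; $xy\sqcap z\sqsubseteq x(y\sqcap x^{\smile}z)$. A relation algebra is a Stone relation algebra with $\overline{\overline{x}}=x$ for all $x$. Arithmetic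 in $\mathbb{N}\cup\{\infty\}$ is the usual one with $n+\infty=\infty+n=\infty$, $n\le\infty$. *)

theory Defs
  imports Main "HOL-Library.Extended_Nat"
begin

text \<open>The order is x \<sqsubseteq> y iff join x y = y.\<close>

definition stone_relation_algebra ::
  "('a \<Rightarrow> 'a \<Rightarrow> 'a) \<Rightarrow> ('a \<Rightarrow> 'a \<Rightarrow> 'a) \<Rightarrow> ('a \<Rightarrow> 'a \<Rightarrow> 'a) \<Rightarrow>
   ('a \<Rightarrow> 'a) \<Rightarrow> ('a \<Rightarrow> 'a) \<Rightarrow> 'a \<Rightarrow> 'a \<Rightarrow> 'a \<Rightarrow> bool" where
  "stone_relation_algebra join meet mult pc conv bt tp un \<longleftrightarrow>
     \<comment> \<open>bounded distributive lattice\<close>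
     (\<forall>x y z. join x (join y z) = join (join x y) z) \<and>
     (\<forall>x y. join x y = join y x) \<and>
     (\<forall>x. join x x = x) \<and>
     (\<forall>x y z. meet x (meet y z) = meet (meet x y) z) \<and>
     (\<forall>x y. meet x y = meet y x) \<and>
     (\<forall>x. meet x x = x) \<and>
     (\<forall>x y. join x (meet x y) = x) \<and>
     (\<forall>x y. meet x (join x y) = x) \<and>
     (\<forall>x y z. meet x (join y z) = join (meet x y) (meet x z)) \<and>
     (\<forall>x. join x bt = x) \<and>
     (\<forall>x. meet x tp = x) \<and>
     \<comment> \<open>pseudocomplement and Stone axiom\<close>
     (\<forall>x y. meet x y = bt \<longleftrightarrow> join x (pc y) = pc y) \<and>
     (\<forall>x. join (pc x) (pc (pc x)) = tp) \<and>
     \<comment> \<open>composition: monoid, distributes over join, bt is zero\<close>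
     (\<forall>x y z. mult x (mult y z) = mult (mult x y) z) \<and>
     (\<forall>x. mult un x = x) \<and>
     (\<forall>x. mult x un = x) \<and>
     (\<forall>x y z. mult x (join y z) = join (mult x y) (mult x z)) \<and>
     (\<forall>x y z. mult (join x y) z = join (mult x z) (mult y z)) \<and>
     (\<forall>x. mult bt x = bt) \<and>
     (\<forall>x. mult x bt = bt) \<and>
     \<comment> \<open>converse\<close>
     (\<forall>x. conv (conv x) = x) \<and>
     (\<forall>x y. conv (mult x y) = mult (conv y) (conv x)) \<and>
     (\<forall>x y. conv (join x y) = join (conv x) (conv y)) \<and>
     \<comment> \<open>remaining axioms\<close>
     pc (pc un) = un \<and>
     (\<forall>x y. pc (pc (mult x y)) = mult (pc (pc x)) (pc (pc y))) \<and>
     (\<forall>x y z. join (meet (mult x y) z) (mult x (meet y (mult (conv x) z)))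
                = mult x (meet y (mult (conv x) z)))"

definition relation_algebra ::
  "('a \<Rightarrow> 'a \<Rightarrow> 'a) \<Rightarrow> ('a \<Rightarrow> 'a \<Rightarrow> 'a) \<Rightarrow> ('a \<Rightarrow> 'a \<Rightarrow> 'a) \<Rightarrow>
   ('a \<Rightarrow> 'a) \<Rightarrow> ('a \<Rightarrow> 'a) \<Rightarrow> 'a \<Rightarrow> 'a \<Rightarrow> 'a \<Rightarrow> bool" where
  "relation_algebra join meet mult pc conv bt tp un \<longleftrightarrow>
     stone_relation_algebra join meet mult pc conv bt tp un \<and> (\<forall>x. pc (pc x) = x)"

end

theory Submission
  imports Defs
begin

(* In a Boolean algebra every y above x is the disjoint join of x and y \<sqinter> -x, so additivity
   gives #y = #x + #(y \<sqinter> -x) \<ge> #x. Likewise #x + #(-x) = #\<top>; if #x = #\<top> is finite, then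
   #(-x) = 0, hence -x = \<bottom> and x = \<top>. *)

lemma relation_algebra_abstract_boolean_algebra:
  assumes "relation_algebra join meet mult pc conv bt tp un"
  shows "abstract_boolean_algebra meet join pc bt tp"
proof -
  note ax = assms[unfolded relation_algebra_def stone_relation_algebra_def]
  have join_assoc: "join x (join y z) = join (join x y) z"
    and join_comm: "join x y = join y x"
    and join_idem: "join x x = x"
    and meet_assoc: "meet x (meet y z) = meet (meet x y) z"
    and meet_comm: "meet x y = meet y x"
    and join_absorb: "join x (meet x y) = x"
    and meet_absorb: "meet x (join x y) = x"
    and meet_join_distrib: "meet x (join y z) = join (meet x y) (meet x z)"
    and join_bot: "join x bt = x"
    and meet_top: "meet x tp = x"
    and pseudocompl: "meet x y = bt \<longleftrightarrow> join x (pc y) = pc y"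
    and stone: "join (pc x) (pc (pc x)) = tp"
    and double_pc: "pc (pc x) = x"
    for x y z
    using ax by metis+
  show ?thesis
  proof (unfold_locales)
    fix x y z
    show "meet (meet x y) z = meet x (meet y z)" by (rule meet_assoc[symmetric])
    show "meet x y = meet y x" by (rule meet_comm)
    show "join (join x y) z = join x (join y z)" by (rule join_assoc[symmetric])
    show "join x y = join y x" by (rule join_comm)
    show "meet x (join y z) = join (meet x y) (meet x z)" by (rule meet_join_distrib)
    show "meet x tp = x" by (rule meet_top)
    show "join x bt = x" by (rule join_bot)
    have "meet (join x y) (join x z) = join (meet (join x y) x) (meet (join x y) z)"
      by (rule meet_join_distrib)
    also have "\<dots> = join x (join (meet z x) (meet z y))"
      by (simp only: meet_comm[of "join x y" x] meet_comm[of "join x y" z]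
          meet_absorb meet_join_distrib)
    also have "\<dots> = join (join x (meet x z)) (meet z y)"
      by (simp only: join_assoc meet_comm[of z x])
    also have "\<dots> = join x (meet y z)"
      by (simp only: join_absorb meet_comm[of z y])
    finally show "join x (meet y z) = meet (join x y) (join x z)" ..
    show "meet x (pc x) = bt"
      using pseudocompl[of "pc x" x] by (simp add: join_idem meet_comm[of x "pc x"])
    show "join x (pc x) = tp"
      using stone[of x] by (simp add: double_pc join_comm[of x "pc x"])
  qed
qed

context abstract_boolean_algebra
begin

lemma disj_conj_compl_eq:
  assumes "x \<^bold>\<squnion> y = y"
  shows "x \<^bold>\<squnion> (y \<^bold>\<sqinter> \<^bold>- x) = y"
  by (simp add: disj_conj_distrib assms)

lemma conj_conj_compl_eq_zero: "x \<^bold>\<sqinter> (y \<^bold>\<sqinter> \<^bold>- x) = \<^bold>0"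
  by (simp only: conj.left_commute[of x y] conj_cancel_right conj_zero_right)

lemma additive_count_mono:
  fixes cnt :: "'a \<Rightarrow> 'b::canonically_ordered_monoid_add"
  assumes zero: "cnt \<^bold>0 = 0"
    and additive: "\<And>x y. cnt x + cnt y = cnt (x \<^bold>\<squnion> y) + cnt (x \<^bold>\<sqinter> y)"
    and "x \<^bold>\<squnion> y = y"
  shows "cnt x \<le> cnt y"
proof -
  have "cnt x + cnt (y \<^bold>\<sqinter> \<^bold>- x) = cnt y"
    using additive[of x "y \<^bold>\<sqinter> \<^bold>- x"]
    by (simp only: disj_conj_compl_eq[OF \<open>x \<^bold>\<squnion> y = y\<close>] conj_conj_compl_eq_zero zero add_0_right)
  then show ?thesis
    by (metis le_iff_add)
qed

lemma additive_count_eq_top_iff: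
  fixes cnt :: "'a \<Rightarrow> enat"
  assumes zero_iff: "\<And>x. cnt x = 0 \<longleftrightarrow> x = \<^bold>0"
    and additive: "\<And>x y. cnt x + cnt y = cnt (x \<^bold>\<squnion> y) + cnt (x \<^bold>\<sqinter> y)"
    and finite: "cnt \<^bold>1 \<noteq> \<infinity>"
  shows "cnt x = cnt \<^bold>1 \<longleftrightarrow> x = \<^bold>1"
proof
  assume "cnt x = cnt \<^bold>1"
  then have "cnt \<^bold>1 + cnt (\<^bold>- x) = cnt \<^bold>1 + 0"
    using additive[of x "\<^bold>- x"] zero_iff[of "\<^bold>0"] by simp
  then have "cnt (\<^bold>- x) = 0"
    using finite by (simp add: enat_add_left_cancel)
  then have "\<^bold>- x = \<^bold>0"
    using zero_iff by blast
  then show "x = \<^bold>1"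
    by (metis double_compl compl_zero)
qed simp

end

theorem mainTheorem4:
  fixes join meet mult :: "'a \<Rightarrow> 'a \<Rightarrow> 'a"
    and pc conv :: "'a \<Rightarrow> 'a"
    and bt tp un :: 'a
    and cnt :: "'a \<Rightarrow> enat"
  assumes "relation_algebra join meet mult pc conv bt tp un"
  shows "((cnt bt = 0 \<and> (\<forall>x y. cnt x + cnt y = cnt (join x y) + cnt (meet x y)))
            \<longrightarrow> (\<forall>x y. join x y = y \<longrightarrow> cnt x \<le> cnt y))
       \<and> (((\<forall>x. cnt x = 0 \<longleftrightarrow> x = bt)
            \<and> (\<forall>x y. cnt x + cnt y = cnt (join x y) + cnt (meet x y))
            \<and> cnt tp \<noteq> \<infinity>)
            \<longrightarrow> (\<forall>x. cnt x = cnt tp \<longleftrightarrow> x = tp))"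
proof -
  interpret abstract_boolean_algebra meet join pc bt tp
    using assms by (rule relation_algebra_abstract_boolean_algebra)
  show ?thesis
    using additive_count_mono[of cnt] additive_count_eq_top_iff[of cnt] by blast
qed

end
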